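(* Let $\mathcal D$ be universal, $\mathrm M=(M,d)\in\mathfrak U_{\mathcal D}$, and let $r\in\mathcal D$, $r>0$, be such that no element of $\mathcal D$ lies in the interval $(r,2r]$. Then the relation $x\sim_r y\iff d(x,y)\le r$ is an equivalence relation on $M$, and for any two distinct $\sim_r$-classes $A\ne B$, any $a\in A$ and any $n\in d(A,B)$: (1) $n>2r$; (2) there exists $b\in B$ with $d(a,b)=n$; (3) $d_{\max}(A,B)-d_{\min}(A,B)\le r$.
   Context: $\mathcal D$ is a finite subset of $\mathbb R_{\ge0}$ containing $0$. $\mathfrak U_{\mathcal D}$ is the class of countable homogeneous metric spaces (every isometry between finite subspaces extends to an isometry of the space onto itself) with distance set exactly $\mathcal D$ into which every finite metric space with distances in $\mathcal D$ embeds isometrically; $\mathcal D$ is universal if this class is nonempty. For subsets $A,B\subseteq M$: $d(A,B)=\{d(a,b):a\in A,b\in B\}$, $d_{\min}(A,B)=\min d(A,B)$, $d_{\max}(A,B)=\max d(A,B)$. *)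

theory Defs
  imports Complex_Main "HOL-Library.Countable_Set"
begin

definition metric_on :: "'a set \<Rightarrow> ('a \<Rightarrow> 'a \<Rightarrow> real) \<Rightarrow> bool" where
  "metric_on M d \<longleftrightarrow>
     (\<forall>x\<in>M. \<forall>y\<in>M. 0 \<le> d x y \<and> (d x y = 0 \<longleftrightarrow> x = y) \<and> d x y = d y x) \<and>
     (\<forall>x\<in>M. \<forall>y\<in>M. \<forall>z\<in>M. d x z \<le> d x y + d y z)"

definition dist_set :: "'a set \<Rightarrow> ('a \<Rightarrow> 'a \<Rightarrow> real) \<Rightarrow> real set" where
  "dist_set M d = {d x y | x y. x \<in> M \<and> y \<in> M}"

definition dAB :: "('a \<Rightarrow> 'a \<Rightarrow> real) \<Rightarrow> 'a set \<Rightarrow> 'a set \<Rightarrow> real set" where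
  "dAB d A B = {d a b | a b. a \<in> A \<and> b \<in> B}"

definition homogeneous :: "'a set \<Rightarrow> ('a \<Rightarrow> 'a \<Rightarrow> real) \<Rightarrow> bool" where
  "homogeneous M d \<longleftrightarrow>
     (\<forall>F f. finite F \<and> F \<subseteq> M \<and> f ` F \<subseteq> M \<and> (\<forall>x\<in>F. \<forall>y\<in>F. d (f x) (f y) = d x y) \<longrightarrow>
        (\<exists>g. bij_betw g M M \<and> (\<forall>x\<in>M. \<forall>y\<in>M. d (g x) (g y) = d x y) \<and> (\<forall>x\<in>F. g x = f x)))"

text \<open>Every finite metric space with distances in D embeds isometrically.
  Finite metric spaces are represented (up to isometry) on carriers {..<n}.\<close>
definition embeds_all_finite :: "real set \<Rightarrow> 'a set \<Rightarrow> ('a \<Rightarrow> 'a \<Rightarrow> real) \<Rightarrow> bool" where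
  "embeds_all_finite D M d \<longleftrightarrow>
     (\<forall>(n::nat) e. metric_on {..<n} e \<and> dist_set {..<n} e \<subseteq> D \<longrightarrow>
        (\<exists>h. h ` {..<n} \<subseteq> M \<and> (\<forall>i<n. \<forall>j<n. d (h i) (h j) = e i j)))"

definition in_UD :: "real set \<Rightarrow> 'a set \<Rightarrow> ('a \<Rightarrow> 'a \<Rightarrow> real) \<Rightarrow> bool" where
  "in_UD D M d \<longleftrightarrow> metric_on M d \<and> countable M \<and> homogeneous M d \<and>
     dist_set M d = D \<and> embeds_all_finite D M d"

text \<open>D is universal iff U_D is nonempty (countable spaces encoded on subsets of nat).\<close>
definition universal_dset :: "real set \<Rightarrow> bool" where
  "universal_dset D \<longleftrightarrow> (\<exists>(M::nat set) d. in_UD D M d)"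

end

theory Submission
  imports Defs
begin

(* The gap hypothesis (no distance in (r,2r]) makes "distance at most r"
   transitive: two r-steps give a distance at most 2r, hence at most r.  So the
   closeness relation is an equivalence, and points in distinct classes are more
   than 2r apart.  The only non-metric ingredient is a "rectangle completion"
   property of spaces in U_D: for distinct x0, x1, x2 there is y with
   d(x1,y) = d(x0,x2) and d(x2,y) = d(x0,x1).  It follows from universality (a
   4-point rectangle with these side lengths embeds) and homogeneity (the
   embedded triangle is moved onto x0 x1 x2, carrying the fourth corner along).
   Given a in A and a distance n = d(a',b') between classes A and B, completing
   the rectangle on a', a, b' yields y with d(a,y) = n and d(b',y) = d(a',a) <= r,
   so y lies in B: this is (2).  Applying (2) to the pair realising the minimum
   and the triangle inequality inside B gives (3).
   The file first proves rectangle completion (via a general lemma moving a point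
   along with a finite configuration in a homogeneous space), then develops the
   classes in a locale for metric spaces with a distance gap, and finally derives
   the theorem by interpreting that locale. *)

lemma metric_onD:
  assumes "metric_on M d"
  shows metric_nonneg: "\<And>x y. x \<in> M \<Longrightarrow> y \<in> M \<Longrightarrow> 0 \<le> d x y"
    and metric_zero_iff: "\<And>x y. x \<in> M \<Longrightarrow> y \<in> M \<Longrightarrow> d x y = 0 \<longleftrightarrow> x = y"
    and metric_self: "\<And>x. x \<in> M \<Longrightarrow> d x x = 0"
    and metric_sym: "\<And>x y. x \<in> M \<Longrightarrow> y \<in> M \<Longrightarrow> d x y = d y x"
    and metric_triangle: "\<And>x y z. x \<in> M \<Longrightarrow> y \<in> M \<Longrightarrow> z \<in> M \<Longrightarrow> d x z \<le> d x y + d y z"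
  using assms unfolding metric_on_def by blast+

lemma dist_set_memI: "x \<in> M \<Longrightarrow> y \<in> M \<Longrightarrow> d x y \<in> dist_set M d"
  unfolding dist_set_def by blast

text \<open>If the finite configuration q (indexed by I) is isometric to p, then
  every point w has a counterpart y placed relative to p as w is relative to q:
  extend the partial isometry q i \<mapsto> p i to the whole space and take the image of w.\<close>

lemma homogeneous_copy_point:
  assumes hom: "homogeneous M d" and I: "finite I" and inj: "inj_on q I"
    and pM: "p ` I \<subseteq> M" and qM: "q ` I \<subseteq> M" and w: "w \<in> M"
    and iso: "\<And>i j. i \<in> I \<Longrightarrow> j \<in> I \<Longrightarrow> d (p i) (p j) = d (q i) (q j)"
  shows "\<exists>y\<in>M. \<forall>i\<in>I. d (p i) y = d (q i) w"
proof -
  define f where "f = p \<circ> the_inv_into I q"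
  have f_q: "f (q i) = p i" if "i \<in> I" for i
    using the_inv_into_f_f[OF inj that] by (simp add: f_def)
  have "finite (q ` I)" "q ` I \<subseteq> M" "f ` q ` I \<subseteq> M"
    using I qM pM f_q by auto
  moreover have "\<forall>u\<in>q ` I. \<forall>v\<in>q ` I. d (f u) (f v) = d u v"
    using f_q iso by auto
  ultimately have "\<exists>g. bij_betw g M M \<and> (\<forall>x\<in>M. \<forall>y\<in>M. d (g x) (g y) = d x y)
      \<and> (\<forall>u\<in>q ` I. g u = f u)"
    by (intro hom[unfolded homogeneous_def, rule_format] conjI)
  then obtain g where g_bij: "bij_betw g M M" and g_iso: "\<forall>x\<in>M. \<forall>y\<in>M. d (g x) (g y) = d x y"
    and g_ext: "\<forall>u\<in>q ` I. g u = f u"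
    by blast
  have "d (p i) (g w) = d (q i) w" if "i \<in> I" for i
  proof -
    have "q i \<in> M" using qM that by blast
    then have "d (g (q i)) (g w) = d (q i) w" using g_iso w by blast
    moreover have "g (q i) = p i" using g_ext f_q that by simp
    ultimately show ?thesis by simp
  qed
  moreover have "g w \<in> M" using g_bij w by (rule bij_betw_apply)
  ultimately show ?thesis by blast
qed

section \<open>Rectangle completion\<close>

definition rectangle :: "real \<Rightarrow> real \<Rightarrow> real \<Rightarrow> nat \<Rightarrow> nat \<Rightarrow> real" where
  "rectangle s n m i j = (if i = j then 0
     else if (i, j) \<in> {(0, 1), (1, 0), (2, 3), (3, 2)} then s
     else if (i, j) \<in> {(0, 2), (2, 0), (1, 3), (3, 1)} then n else m)"

lemma rectangle_metric:
  assumes "s > 0" "n > 0" "m > 0" "s \<le> n + m" "n \<le> s + m" "m \<le> s + n"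
  shows "metric_on {..<4} (rectangle s n m)"
  unfolding metric_on_def
proof (intro conjI ballI)
  fix x y :: nat assume "x \<in> {..<4}" "y \<in> {..<4}"
  then have "x = 0 \<or> x = 1 \<or> x = 2 \<or> x = 3" "y = 0 \<or> y = 1 \<or> y = 2 \<or> y = 3"
    by auto
  then show "0 \<le> rectangle s n m x y" "(rectangle s n m x y = 0) = (x = y)"
    "rectangle s n m x y = rectangle s n m y x"
    using assms by (auto simp: rectangle_def)
next
  fix x y z :: nat assume "x \<in> {..<4}" "y \<in> {..<4}" "z \<in> {..<4}"
  then have "x = 0 \<or> x = 1 \<or> x = 2 \<or> x = 3" "y = 0 \<or> y = 1 \<or> y = 2 \<or> y = 3"
    "z = 0 \<or> z = 1 \<or> z = 2 \<or> z = 3"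
    by auto
  then show "rectangle s n m x z \<le> rectangle s n m x y + rectangle s n m y z"
    using assms by (auto simp: rectangle_def)
qed

lemma rectangle_dist_set: "dist_set {..<4} (rectangle s n m) \<subseteq> {0, s, n, m}"
  unfolding dist_set_def rectangle_def by auto

lemma triangle_rectangle_dist:
  assumes met: "metric_on M d" and x: "x0 \<in> M" "x1 \<in> M" "x2 \<in> M"
    and "i < 3" "j < 3"
  shows "d ([x0, x1, x2] ! i) ([x0, x1, x2] ! j) = rectangle (d x0 x1) (d x0 x2) (d x1 x2) i j"
proof -
  have diag: "d x0 x0 = 0" "d x1 x1 = 0" "d x2 x2 = 0"
    using metric_self[OF met] x by simp_all
  have swapped: "d x1 x0 = d x0 x1" "d x2 x0 = d x0 x2" "d x2 x1 = d x1 x2"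
    using metric_sym[OF met] x by simp_all
  have "i = 0 \<or> i = 1 \<or> i = 2" "j = 0 \<or> j = 1 \<or> j = 2" using assms(5,6) by auto
  then show ?thesis using diag swapped by (elim disjE) (simp_all add: rectangle_def)
qed

lemma rectangle_copy_inj:
  assumes met: "metric_on M d" and pos: "s > 0" "n > 0" "m > 0" and hM: "h ` {..<4} \<subseteq> M"
    and h_dist: "\<And>i j. i < 4 \<Longrightarrow> j < 4 \<Longrightarrow> d (h i) (h j) = rectangle s n m i j"
  shows "inj_on h {..<4}"
proof (rule inj_onI)
  fix i j assume ij: "i \<in> {..<4}" "j \<in> {..<4}" and "h i = h j"
  then have "rectangle s n m i j = 0"
    using h_dist[of i j] metric_self[OF met] hM by auto
  then show "i = j" using pos by (auto simp: rectangle_def split: if_splits)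
qed

text \<open>In a homogeneous space into which every finite metric space with distances
  in D embeds, every triangle x0 x1 x2 can be completed to a rectangle
  x0 x1 y x2 (with sides d(x0,x1) = d(x2,y) and d(x0,x2) = d(x1,y)): embed the
  rectangle with these sides, then move its corners 0, 1, 2 onto the triangle.\<close>

lemma rectangle_completion:
  assumes met: "metric_on M d" and hom: "homogeneous M d"
    and emb: "embeds_all_finite D M d" and ds: "dist_set M d \<subseteq> D"
    and x: "x0 \<in> M" "x1 \<in> M" "x2 \<in> M" and distinct: "x0 \<noteq> x1" "x0 \<noteq> x2" "x1 \<noteq> x2"
  shows "\<exists>y\<in>M. d x1 y = d x0 x2 \<and> d x2 y = d x0 x1"
proof -
  define s n m where "s = d x0 x1" and "n = d x0 x2" and "m = d x1 x2"
  note defs = s_def n_def m_def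
  have pos: "s > 0" "n > 0" "m > 0"
    using metric_nonneg[OF met] metric_zero_iff[OF met] x distinct unfolding defs
    by (simp_all add: order_less_le)
  have tri: "s \<le> n + m" "n \<le> s + m" "m \<le> s + n"
    using metric_triangle[OF met, of x0 x2 x1] metric_triangle[OF met, of x0 x1 x2]
      metric_triangle[OF met, of x1 x0 x2] metric_sym[OF met] x
    unfolding defs by simp_all
  have "{0, s, n, m} \<subseteq> D"
    using ds dist_set_memI[of _ M _ d] metric_self[OF met] x unfolding defs
    by (metis empty_subsetI insert_subset subsetD)
  then have "dist_set {..<4} (rectangle s n m) \<subseteq> D"
    using rectangle_dist_set by (rule order_trans[rotated])
  then have "\<exists>h. h ` {..<4} \<subseteq> M \<and> (\<forall>i<4. \<forall>j<4. d (h i) (h j) = rectangle s n m i j)"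
    by (rule emb[unfolded embeds_all_finite_def, rule_format, OF conjI[OF rectangle_metric[OF pos tri]]])
  then obtain h where hM: "h ` {..<4} \<subseteq> M"
    and h_rect: "\<forall>i<4. \<forall>j<4. d (h i) (h j) = rectangle s n m i j"
    by (elim exE conjE)
  have h_dist: "d (h i) (h j) = rectangle s n m i j" if "i < 4" "j < 4" for i j
    using h_rect that by simp
  have inj: "inj_on h {..<3}"
    using rectangle_copy_inj[OF met pos hM h_dist] by (rule inj_on_subset) auto
  let ?p = "\<lambda>i. [x0, x1, x2] ! i"
  have pM: "?p ` {..<3} \<subseteq> M"
    using x by (auto simp: less_Suc_eq numeral_3_eq_3)
  have hM3: "h ` {..<3} \<subseteq> M" "h 3 \<in> M"
    using hM by auto
  have iso: "d (?p i) (?p j) = d (h i) (h j)" if "i \<in> {..<3}" "j \<in> {..<3}" for i j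
    using that triangle_rectangle_dist[OF met x] h_dist unfolding defs by simp
  obtain y where "y \<in> M" and y: "\<forall>i\<in>{..<3}. d (?p i) y = d (h i) (h 3)"
    using homogeneous_copy_point[OF hom finite_lessThan inj pM hM3 iso] by blast
  moreover have "d x1 y = n" "d x2 y = s"
    using y[rule_format, of 1] y[rule_format, of 2] h_dist[of 1 3] h_dist[of 2 3]
    by (simp_all add: rectangle_def)
  ultimately show ?thesis unfolding defs by blast
qed

section \<open>The closeness relation below a distance gap\<close>

definition close_rel :: "'a set \<Rightarrow> ('a \<Rightarrow> 'a \<Rightarrow> real) \<Rightarrow> real \<Rightarrow> ('a \<times> 'a) set" where
  "close_rel M d r = {(x, y). x \<in> M \<and> y \<in> M \<and> d x y \<le> r}"

locale gap_metric =
  fixes M :: "'a set" and d :: "'a \<Rightarrow> 'a \<Rightarrow> real" and r :: real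
  assumes metric: "metric_on M d" and r_nonneg: "0 \<le> r"
    and gap: "\<And>x y. x \<in> M \<Longrightarrow> y \<in> M \<Longrightarrow> \<not> (r < d x y \<and> d x y \<le> 2 * r)"
begin

text \<open>Two r-steps give a distance at most 2r, hence at most r by the gap.\<close>

lemma close_rel_equiv: "equiv M (close_rel M d r)"
proof (rule equivI)
  show "refl_on M (close_rel M d r)"
    using metric_self[OF metric] r_nonneg by (simp add: refl_on_def close_rel_def)
  show "sym (close_rel M d r)"
    using metric_sym[OF metric] by (auto simp: sym_def close_rel_def)
  show "trans (close_rel M d r)"
  proof (rule transI)
    fix x y z assume "(x, y) \<in> close_rel M d r" "(y, z) \<in> close_rel M d r"
    then have "x \<in> M" "z \<in> M" "d x z \<le> 2 * r"
      using metric_triangle[OF metric, of x y z] by (auto simp: close_rel_def)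
    then show "(x, z) \<in> close_rel M d r"
      using gap[of x z] by (auto simp: close_rel_def)
  qed
qed (auto simp: close_rel_def)

lemma class_subset: "A \<in> M // close_rel M d r \<Longrightarrow> A \<subseteq> M"
  by (auto simp: quotient_def close_rel_def)

lemma same_class_iff:
  assumes "A \<in> M // close_rel M d r" "B \<in> M // close_rel M d r" "a \<in> A" "b \<in> B"
  shows "A = B \<longleftrightarrow> d a b \<le> r"
  using quotient_eq_iff[OF close_rel_equiv assms] assms class_subset
  by (auto simp: close_rel_def)

lemma close_point_in_class:
  assumes A: "A \<in> M // close_rel M d r" and a: "a \<in> A" and y: "y \<in> M" and "d a y \<le> r"
  shows "y \<in> A"
proof -
  let ?C = "close_rel M d r `` {y}"
  have C: "?C \<in> M // close_rel M d r" using y by (rule quotientI)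
  have "y \<in> ?C" using equiv_class_self[OF close_rel_equiv y] .
  then have "A = ?C" using same_class_iff[OF A C a] \<open>d a y \<le> r\<close> by blast
  then show ?thesis using \<open>y \<in> ?C\<close> by blast
qed

lemma distinct_classes_far:
  assumes "A \<in> M // close_rel M d r" "B \<in> M // close_rel M d r" "A \<noteq> B" "a \<in> A" "b \<in> B"
  shows "d a b > 2 * r"
proof -
  have "a \<in> M" "b \<in> M" using assms class_subset by blast+
  then show ?thesis using same_class_iff[OF assms(1,2,4,5)] assms(3) gap[of a b] by linarith
qed

text \<open>In a space of U_D, every distance between two distinct classes A and B is
  realised from every point of A: complete the rectangle on a', a, b' for a
  realising pair (a', b'); the new corner is within r of b', hence in B.\<close>

lemma class_distance_realised:
  assumes U: "in_UD D M d"
    and A: "A \<in> M // close_rel M d r" and B: "B \<in> M // close_rel M d r" and "A \<noteq> B"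
    and a: "a \<in> A" and dist: "n \<in> dAB d A B"
  shows "\<exists>b\<in>B. d a b = n"
proof -
  obtain a' b' where a': "a' \<in> A" and b': "b' \<in> B" and n: "n = d a' b'"
    using dist unfolding dAB_def by blast
  have M: "a \<in> M" "a' \<in> M" "b' \<in> M" using a a' b' A B class_subset by blast+
  show ?thesis
  proof (cases "a = a'")
    case True then show ?thesis using b' n by blast
  next
    case False
    have "d a b' \<noteq> 0" "d a' b' \<noteq> 0"
      using distinct_classes_far[OF A B \<open>A \<noteq> B\<close>] a a' b' r_nonneg by force+
    then have "a \<noteq> b'" "a' \<noteq> b'" using metric_self[OF metric] M by auto
    moreover have "homogeneous M d" "embeds_all_finite D M d" "dist_set M d \<subseteq> D"
      using U by (simp_all add: in_UD_def)
    ultimately obtain y where y: "y \<in> M" "d a y = d a' b'" "d b' y = d a' a"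
      using rectangle_completion[OF metric _ _ _ M(2) M(1) M(3)] False by blast
    have "d b' y \<le> r" using y(3) same_class_iff[OF A A a' a] by simp
    then have "y \<in> B" using close_point_in_class[OF B b' y(1)] by blast
    then show ?thesis using y n by blast
  qed
qed

text \<open>The spread of distances between two distinct classes is at most r: the
  maximal distance is realised from the endpoint a2 of a minimal pair (a2, b2), and
  the two partners of a2 lie in the same class B.\<close>

lemma class_distance_spread:
  assumes U: "in_UD D M d" and fin: "finite D"
    and A: "A \<in> M // close_rel M d r" and B: "B \<in> M // close_rel M d r" and "A \<noteq> B"
  shows "Max (dAB d A B) - Min (dAB d A B) \<le> r"
proof -
  have "dAB d A B \<subseteq> dist_set M d"
    using A B class_subset unfolding dAB_def dist_set_def by blast
  then have finite: "finite (dAB d A B)"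
    using U fin finite_subset by (auto simp: in_UD_def)
  have "A \<noteq> {}" "B \<noteq> {}"
    using A B in_quotient_imp_non_empty[OF close_rel_equiv] by blast+
  then have nonempty: "dAB d A B \<noteq> {}" unfolding dAB_def by blast
  obtain a2 b2 where a2: "a2 \<in> A" and b2: "b2 \<in> B" and min: "Min (dAB d A B) = d a2 b2"
    using Min_in[OF finite nonempty] unfolding dAB_def by blast
  obtain b where b: "b \<in> B" and max: "d a2 b = Max (dAB d A B)"
    using class_distance_realised[OF U A B \<open>A \<noteq> B\<close> a2 Max_in[OF finite nonempty]] by blast
  have "d a2 b \<le> d a2 b2 + d b2 b"
    using a2 b2 b A B class_subset metric_triangle[OF metric] by blast
  moreover have "d b2 b \<le> r" using same_class_iff[OF B B b2 b] by simp
  ultimately show ?thesis using min max by linarith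
qed

end

theorem lemma3p2:
  fixes D :: "real set" and M :: "'a set" and d :: "'a \<Rightarrow> 'a \<Rightarrow> real" and r :: real
  assumes "finite D" and "0 \<in> D" and "\<forall>x\<in>D. 0 \<le> x"
    and "universal_dset D"
    and "in_UD D M d"
    and "r \<in> D" and "r > 0"
    and "\<forall>x\<in>D. \<not> (r < x \<and> x \<le> 2 * r)"
  defines "R \<equiv> {(x, y). x \<in> M \<and> y \<in> M \<and> d x y \<le> r}"
  shows "equiv M R \<and>
    (\<forall>A\<in>M // R. \<forall>B\<in>M // R. A \<noteq> B \<longrightarrow>
       (\<forall>a\<in>A. \<forall>n\<in>dAB d A B. n > 2 * r \<and> (\<exists>b\<in>B. d a b = n)) \<and>
       Max (dAB d A B) - Min (dAB d A B) \<le> r)"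
proof -
  have ds: "dist_set M d = D" using \<open>in_UD D M d\<close> by (simp add: in_UD_def)
  interpret gap_metric M d r
  proof
    show "metric_on M d" using \<open>in_UD D M d\<close> by (simp add: in_UD_def)
    show "0 \<le> r" using \<open>r > 0\<close> by simp
    show "\<not> (r < d x y \<and> d x y \<le> 2 * r)" if "x \<in> M" "y \<in> M" for x y
      using assms(8) dist_set_memI[OF that, of d] ds by blast
  qed
  have R: "R = close_rel M d r" by (simp add: R_def close_rel_def)
  have far: "n > 2 * r"
    if "A \<in> M // R" "B \<in> M // R" "A \<noteq> B" "n \<in> dAB d A B" for A B n
    using that distinct_classes_far unfolding R dAB_def by blast
  show ?thesis
    using close_rel_equiv far
      class_distance_realised[OF \<open>in_UD D M d\<close>]
      class_distance_spread[OF \<open>in_UD D M d\<close> \<open>finite D\<close>]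
    unfolding R by blast
qed

end
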